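(* (a) If $x,y\in P$ are distinct, then $|\{x,y\}^{\perp}|\geq 3$ in $\mathbb{S}$. (b) If $u',v'\in P'$ are distinct, then $|\{u',v'\}^{\perp}|\geq 3$ in $\mathbb{S}$.
   Context: Let $S=(P,L)$ and $S'=(P',L')$ be generalized quadrangles of order $(2,2)$ (every line has 3 points, every point lies on 3 lines, and for each point $x$ and line $l\not\ni x$ exactly one point of $l$ is collinear with $x$), with an isomorphism $x\mapsto x'$ from $S$ to $S'$ (write $u$ for the preimage of $u'\in P'$). In a point-line geometry, $x^{\perp}$ is $x$ together with all points collinear with $x$, and $A^{\perp}=\bigcap_{a\in A}a^{\perp}$. A triad is a set of three pairwise non-collinear points, complete if $|T^{\perp}|=3$. Let $\mathcal{P}=\{(x,y')\in P\times P':y'\in x'^{\perp}\}$ and $\mathcal{L}$ the set of all $3$-subsets $\{(x,u'),(y,v'),(z,w')\}$ of $\mathcal{P}$ where $T=\{x,y,z\}$ (three distinct points) is a line or complete triad of $S$ and $\{u',v',w'\}=T'^{\perp}$ in $S'$ with $u',v',w'$ distinct. The geometry $\mathbb{S}=(\mathbb{P},\mathbb{L})$ has point set $\mathbb{P}=\mathcal{P}\cup P\cup P'$ (disjoint union) and line set $\mathcal{L}\cup\{\{x,(x,u'),u'\}:(x,u')\in\mathcal{P}\}$. *)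

theory Defs
  imports Main
begin

definition collinear :: "'p set set \<Rightarrow> 'p \<Rightarrow> 'p \<Rightarrow> bool" where
  "collinear Lns x y \<longleftrightarrow> (\<exists>l\<in>Lns. x \<in> l \<and> y \<in> l)"

definition perp :: "'p set \<Rightarrow> 'p set set \<Rightarrow> 'p \<Rightarrow> 'p set" where
  "perp Pts Lns x = insert x {y \<in> Pts. collinear Lns x y}"

definition setperp :: "'p set \<Rightarrow> 'p set set \<Rightarrow> 'p set \<Rightarrow> 'p set" where
  "setperp Pts Lns A = (\<Inter>a\<in>A. perp Pts Lns a)"

definition gq22 :: "'p set \<Rightarrow> 'p set set \<Rightarrow> bool" where
  "gq22 Pts Lns \<longleftrightarrow>
     (\<forall>l\<in>Lns. l \<subseteq> Pts \<and> card l = 3) \<and>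
     (\<forall>x\<in>Pts. card {l\<in>Lns. x \<in> l} = 3) \<and>
     (\<forall>x\<in>Pts. \<forall>l\<in>Lns. x \<notin> l \<longrightarrow> (\<exists>!y. y \<in> l \<and> collinear Lns x y))"

definition geom_iso :: "('p \<Rightarrow> 'q) \<Rightarrow> 'p set \<Rightarrow> 'p set set \<Rightarrow> 'q set \<Rightarrow> 'q set set \<Rightarrow> bool" where
  "geom_iso f P L P' L' \<longleftrightarrow> bij_betw f P P' \<and> (\<lambda>l. f ` l) ` L = L'"

definition triad :: "'p set \<Rightarrow> 'p set set \<Rightarrow> 'p set \<Rightarrow> bool" where
  "triad Pts Lns T \<longleftrightarrow> (\<exists>x y z. T = {x, y, z} \<and> x \<in> Pts \<and> y \<in> Pts \<and> z \<in> Pts \<and>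
      x \<noteq> y \<and> x \<noteq> z \<and> y \<noteq> z \<and>
      \<not> collinear Lns x y \<and> \<not> collinear Lns x z \<and> \<not> collinear Lns y z)"

definition complete_triad :: "'p set \<Rightarrow> 'p set set \<Rightarrow> 'p set \<Rightarrow> bool" where
  "complete_triad Pts Lns T \<longleftrightarrow> triad Pts Lns T \<and> card (setperp Pts Lns T) = 3"

definition calP :: "('p \<Rightarrow> 'q) \<Rightarrow> 'p set \<Rightarrow> 'q set \<Rightarrow> 'q set set \<Rightarrow> ('p \<times> 'q) set" where
  "calP f P P' L' = {(x, y). x \<in> P \<and> y \<in> P' \<and> y \<in> perp P' L' (f x)}"

definition calL :: "('p \<Rightarrow> 'q) \<Rightarrow> 'p set \<Rightarrow> 'p set set \<Rightarrow> 'q set \<Rightarrow> 'q set set \<Rightarrow> ('p \<times> 'q) set set" where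
  "calL f P L P' L' =
    {{(x, u), (y, v), (z, w)} | x y z u v w.
       (x, u) \<in> calP f P P' L' \<and> (y, v) \<in> calP f P P' L' \<and> (z, w) \<in> calP f P P' L' \<and>
       x \<noteq> y \<and> x \<noteq> z \<and> y \<noteq> z \<and>
       ({x, y, z} \<in> L \<or> complete_triad P L {x, y, z}) \<and>
       {u, v, w} = setperp P' L' (f ` {x, y, z}) \<and>
       u \<noteq> v \<and> u \<noteq> w \<and> v \<noteq> w}"

text \<open>The geometry \<S>: points are Inl (pairs of \<P>), Inr (Inl x) for x in P,
  Inr (Inr u') for u' in P' (disjoint union).\<close>
definition bbP :: "('p \<Rightarrow> 'q) \<Rightarrow> 'p set \<Rightarrow> 'q set \<Rightarrow> 'q set set \<Rightarrow> (('p \<times> 'q) + ('p + 'q)) set" where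
  "bbP f P P' L' = Inl ` calP f P P' L' \<union> (Inr \<circ> Inl) ` P \<union> (Inr \<circ> Inr) ` P'"

definition bbL :: "('p \<Rightarrow> 'q) \<Rightarrow> 'p set \<Rightarrow> 'p set set \<Rightarrow> 'q set \<Rightarrow> 'q set set
    \<Rightarrow> (('p \<times> 'q) + ('p + 'q)) set set" where
  "bbL f P L P' L' = (\<lambda>l. Inl ` l) ` calL f P L P' L' \<union>
     {{Inr (Inl x), Inl (x, u), Inr (Inr u)} | x u. (x, u) \<in> calP f P P' L'}"

end

theory Submission
  imports Defs
begin

text \<open>No line of \<open>\<L>\<close> meets \<open>P \<union> P'\<close>, so in \<open>\<S>\<close> the points collinear with \<open>x \<in> P\<close> are
  exactly the \<open>(x, u')\<close> and \<open>u'\<close> with \<open>u' \<in> x'\<^sup>\<perp>\<close>, and dually for \<open>u' \<in> P'\<close>. Hence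
  \<open>{x, y}\<^sup>\<perp>\<close> in \<open>\<S>\<close> is a copy of \<open>{x', y'}\<^sup>\<perp>\<close> in \<open>S'\<close>, and \<open>{u', v'}\<^sup>\<perp>\<close> is a copy of the
  preimage of \<open>{u', v'}\<^sup>\<perp>\<close> under the isomorphism. In a generalized quadrangle of order (2,2)
  any two points \<open>a, b\<close> have \<open>|{a, b}\<^sup>\<perp>| \<ge> 3\<close>: either they span a line, or each of the
  three lines through \<open>a\<close> carries its own point collinear with \<open>b\<close>.\<close>

lemma collinear_commute: "collinear Lns a b \<longleftrightarrow> collinear Lns b a"
  unfolding collinear_def by blast

lemma perp_subset: "a \<in> Pts \<Longrightarrow> perp Pts Lns a \<subseteq> Pts"
  unfolding perp_def by auto

lemma perp_commute: "b \<in> perp Pts Lns a \<Longrightarrow> a \<in> Pts \<Longrightarrow> a \<in> perp Pts Lns b"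
  unfolding perp_def using collinear_commute by fastforce

lemma setperp_pair: "setperp Pts Lns {a, b} = perp Pts Lns a \<inter> perp Pts Lns b"
  unfolding setperp_def by simp

lemma line_subset_perp: "l \<in> Lns \<Longrightarrow> l \<subseteq> Pts \<Longrightarrow> a \<in> l \<Longrightarrow> l \<subseteq> perp Pts Lns a"
  unfolding perp_def collinear_def by blast

lemma perp_subset_Union_lines: "perp Pts Lns a \<subseteq> insert a (\<Union>{l \<in> Lns. a \<in> l})"
  unfolding perp_def collinear_def by blast

lemma gq22_lineD:
  assumes "gq22 Pts Lns" and "l \<in> Lns"
  shows "l \<subseteq> Pts" and "card l = 3" and "finite l"
  using assms unfolding gq22_def by (auto intro: card_ge_0_finite)

lemma gq22_card_lines_through:
  "gq22 Pts Lns \<Longrightarrow> x \<in> Pts \<Longrightarrow> card {l \<in> Lns. x \<in> l} = 3"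
  unfolding gq22_def by blast

lemma gq22_unique_collinear:
  assumes "gq22 Pts Lns" and "x \<in> Pts" and "l \<in> Lns" and "x \<notin> l"
  shows "\<exists>!y. y \<in> l \<and> collinear Lns x y"
proof -
  have "\<forall>x\<in>Pts. \<forall>l\<in>Lns. x \<notin> l \<longrightarrow> (\<exists>!y. y \<in> l \<and> collinear Lns x y)"
    using assms(1) unfolding gq22_def by (elim conjE)
  from this[rule_format, OF assms(2-4)] show ?thesis .
qed

lemma gq22_finite_lines_through:
  assumes "gq22 Pts Lns"
  shows "finite {l \<in> Lns. x \<in> l}"
proof (cases "x \<in> Pts")
  case True
  then show ?thesis
    using gq22_card_lines_through[OF assms] by (intro card_ge_0_finite) simp
next
  case False
  then have "{l \<in> Lns. x \<in> l} = {}"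
    using gq22_lineD(1)[OF assms] by blast
  then show ?thesis by (simp only: finite.emptyI)
qed

lemma gq22_finite_perp: "gq22 Pts Lns \<Longrightarrow> finite (perp Pts Lns a)"
  using perp_subset_Union_lines gq22_finite_lines_through gq22_lineD(3)
  by (metis (no_types, lifting) finite_Union finite_insert finite_subset mem_Collect_eq)

text \<open>Otherwise a point of \<open>n\<close> off \<open>m\<close> would be collinear with the two points \<open>a, b\<close> of \<open>m\<close>.\<close>

lemma gq22_lines_meet_at_most_once:
  assumes g: "gq22 Pts Lns" and m: "m \<in> Lns" and n: "n \<in> Lns"
    and "a \<in> m" "a \<in> n" "b \<in> m" "b \<in> n" "a \<noteq> b"
  shows "m = n"
proof (rule ccontr)
  assume "m \<noteq> n"
  moreover have "card n = card m" "finite m"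
    using gq22_lineD[OF g m] gq22_lineD[OF g n] by simp_all
  ultimately have "\<not> n \<subseteq> m" using card_subset_eq by metis
  then obtain z where z: "z \<in> n" "z \<notin> m" by blast
  then have "z \<in> Pts" using gq22_lineD(1)[OF g n] by blast
  moreover have "collinear Lns z a" "collinear Lns z b"
    unfolding collinear_def using n z assms(4-7) by auto
  ultimately show False
    using gq22_unique_collinear[OF g _ m z(2)] assms(4,6,8) by blast
qed

lemma gq22_card_setperp_collinear:
  assumes g: "gq22 Pts Lns" and "collinear Lns a b"
  shows "3 \<le> card (setperp Pts Lns {a, b})"
proof -
  obtain l where l: "l \<in> Lns" "a \<in> l" "b \<in> l"
    using assms(2) unfolding collinear_def by blast
  have "l \<subseteq> setperp Pts Lns {a, b}"
    using l gq22_lineD(1)[OF g l(1)] unfolding setperp_pair perp_def collinear_def by blast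
  then have "card l \<le> card (setperp Pts Lns {a, b})"
    using gq22_finite_perp[OF g] by (simp add: setperp_pair card_mono)
  then show ?thesis using gq22_lineD(2)[OF g l(1)] by simp
qed

lemma gq22_card_setperp_noncollinear:
  assumes g: "gq22 Pts Lns" and a: "a \<in> Pts" and b: "b \<in> Pts" and nc: "\<not> collinear Lns a b"
  shows "3 \<le> card (setperp Pts Lns {a, b})"
proof -
  define M where "M = {l \<in> Lns. a \<in> l}"
  define foot where "foot m = (THE y. y \<in> m \<and> collinear Lns b y)" for m
  have foot: "foot m \<in> m" "collinear Lns b (foot m)" if "m \<in> M" for m
  proof -
    have "b \<notin> m" using nc that unfolding M_def collinear_def by blast
    then have "\<exists>!y. y \<in> m \<and> collinear Lns b y"
      using gq22_unique_collinear[OF g b] that unfolding M_def by simp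
    then show "foot m \<in> m" "collinear Lns b (foot m)"
      unfolding foot_def by (metis (no_types, lifting) theI')+
  qed
  have "foot ` M \<subseteq> setperp Pts Lns {a, b}"
  proof
    fix z assume "z \<in> foot ` M"
    then obtain m where m: "m \<in> M" "z = foot m" by blast
    then have "z \<in> Pts" "collinear Lns a z"
      using foot(1)[OF m(1)] gq22_lineD(1)[OF g] unfolding M_def collinear_def by auto
    then show "z \<in> setperp Pts Lns {a, b}"
      using foot(2)[OF m(1)] m(2) unfolding setperp_pair perp_def by blast
  qed
  moreover have "inj_on foot M"
  proof
    fix m n assume mn: "m \<in> M" "n \<in> M" "foot m = foot n"
    have "foot m \<noteq> a" using foot(2)[OF mn(1)] nc collinear_commute by metis
    then show "m = n"
      using gq22_lines_meet_at_most_once[OF g, of m n a "foot m"] foot(1) mn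
      unfolding M_def by (metis (no_types, lifting) mem_Collect_eq)
  qed
  ultimately have "card M \<le> card (setperp Pts Lns {a, b})"
    using card_inj_on_le gq22_finite_perp[OF g] by (metis finite_Int setperp_pair)
  then show ?thesis using gq22_card_lines_through[OF g a] unfolding M_def by simp
qed

lemma gq22_card_setperp_pair:
  "gq22 Pts Lns \<Longrightarrow> a \<in> Pts \<Longrightarrow> b \<in> Pts \<Longrightarrow> 3 \<le> card (setperp Pts Lns {a, b})"
  using gq22_card_setperp_collinear gq22_card_setperp_noncollinear by metis

lemma calP_fibre_left:
  assumes "x \<in> P" and "f x \<in> P'"
  shows "{u. (x, u) \<in> calP f P P' L'} = perp P' L' (f x)"
  using assms perp_subset[of "f x" P' L'] unfolding calP_def by auto

lemma calP_fibre_right: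
  assumes "f ` P \<subseteq> P'" and "u \<in> P'"
  shows "{x. (x, u) \<in> calP f P P' L'} = {x \<in> P. f x \<in> perp P' L' u}"
  using assms perp_commute[of _ P' L'] unfolding calP_def by blast

lemma bbL_line_through_Inr:
  assumes "l \<in> bbL f P L P' L'" and "Inr a \<in> l"
  obtains x u where "(x, u) \<in> calP f P P' L'" and "l = {Inr (Inl x), Inl (x, u), Inr (Inr u)}"
  using assms unfolding bbL_def by blast

lemma calP_line_in_bbL:
  assumes "(x, u) \<in> calP f P P' L'"
  shows "{Inr (Inl x), Inl (x, u), Inr (Inr u)} \<in> bbL f P L P' L'"
    and "{Inr (Inl x), Inl (x, u), Inr (Inr u)} \<subseteq> bbP f P P' L'"
  using assms unfolding bbL_def bbP_def calP_def by auto

lemma perp_bbP_Inr_Inl: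
  "perp (bbP f P P' L') (bbL f P L P' L') (Inr (Inl x)) =
     insert (Inr (Inl x))
       ((\<lambda>u. Inl (x, u)) ` {u. (x, u) \<in> calP f P P' L'} \<union> (Inr \<circ> Inr) ` {u. (x, u) \<in> calP f P P' L'})"
  (is "?perp = ?rhs")
proof
  show "?perp \<subseteq> ?rhs"
    unfolding perp_def collinear_def by (auto elim!: bbL_line_through_Inr)
  show "?rhs \<subseteq> ?perp"
  proof
    fix z assume "z \<in> ?rhs"
    then consider "z = Inr (Inl x)"
      | u where "(x, u) \<in> calP f P P' L'" "z \<in> {Inr (Inl x), Inl (x, u), Inr (Inr u)}"
      by auto
    then show "z \<in> ?perp"
    proof cases
      case 1
      then show ?thesis by (simp add: perp_def)
    next
      case (2 w)
      then show ?thesis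
        using line_subset_perp[OF calP_line_in_bbL[OF 2(1)], of "Inr (Inl x)"] by blast
    qed
  qed
qed

lemma perp_bbP_Inr_Inr:
  "perp (bbP f P P' L') (bbL f P L P' L') (Inr (Inr u)) =
     insert (Inr (Inr u))
       ((\<lambda>x. Inl (x, u)) ` {x. (x, u) \<in> calP f P P' L'} \<union> (Inr \<circ> Inl) ` {x. (x, u) \<in> calP f P P' L'})"
  (is "?perp = ?rhs")
proof
  show "?perp \<subseteq> ?rhs"
    unfolding perp_def collinear_def by (auto elim!: bbL_line_through_Inr)
  show "?rhs \<subseteq> ?perp"
  proof
    fix z assume "z \<in> ?rhs"
    then consider "z = Inr (Inr u)"
      | x where "(x, u) \<in> calP f P P' L'" "z \<in> {Inr (Inl x), Inl (x, u), Inr (Inr u)}"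
      by auto
    then show "z \<in> ?perp"
    proof cases
      case 1
      then show ?thesis by (simp add: perp_def)
    next
      case (2 w)
      then show ?thesis
        using line_subset_perp[OF calP_line_in_bbL[OF 2(1)], of "Inr (Inr u)"] by blast
    qed
  qed
qed

lemma setperp_bbP_Inr_Inl_pair:
  assumes "x \<noteq> y"
  shows "setperp (bbP f P P' L') (bbL f P L P' L') {Inr (Inl x), Inr (Inl y)} =
    (Inr \<circ> Inr) ` ({u. (x, u) \<in> calP f P P' L'} \<inter> {u. (y, u) \<in> calP f P P' L'})"
  using assms unfolding setperp_pair perp_bbP_Inr_Inl by auto

lemma setperp_bbP_Inr_Inr_pair:
  assumes "u \<noteq> v"
  shows "setperp (bbP f P P' L') (bbL f P L P' L') {Inr (Inr u), Inr (Inr v)} =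
    (Inr \<circ> Inl) ` ({x. (x, u) \<in> calP f P P' L'} \<inter> {x. (x, v) \<in> calP f P P' L'})"
  using assms unfolding setperp_pair perp_bbP_Inr_Inr by auto

theorem lemma4p1:
  fixes P :: "'p set" and L :: "'p set set" and P' :: "'q set" and L' :: "'q set set"
    and f :: "'p \<Rightarrow> 'q"
  assumes "gq22 P L" and "gq22 P' L'" and "geom_iso f P L P' L'"
  shows "(\<forall>x\<in>P. \<forall>y\<in>P. x \<noteq> y \<longrightarrow>
            card (setperp (bbP f P P' L') (bbL f P L P' L') {Inr (Inl x), Inr (Inl y)}) \<ge> 3)
       \<and> (\<forall>u\<in>P'. \<forall>v\<in>P'. u \<noteq> v \<longrightarrow>
            card (setperp (bbP f P P' L') (bbL f P L P' L') {Inr (Inr u), Inr (Inr v)}) \<ge> 3)"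
proof -
  have fP: "f ` P = P'" and inj: "inj_on f P"
    using assms(3) unfolding geom_iso_def bij_betw_def by blast+
  have "3 \<le> card (setperp (bbP f P P' L') (bbL f P L P' L') {Inr (Inl x), Inr (Inl y)})"
    if "x \<in> P" "y \<in> P" "x \<noteq> y" for x y
  proof -
    have "f x \<in> P'" "f y \<in> P'" using that fP by blast+
    then have "setperp (bbP f P P' L') (bbL f P L P' L') {Inr (Inl x), Inr (Inl y)} =
        (Inr \<circ> Inr) ` setperp P' L' {f x, f y}"
      using that by (simp add: setperp_bbP_Inr_Inl_pair calP_fibre_left) (simp add: setperp_pair)
    then show ?thesis
      using gq22_card_setperp_pair[OF assms(2) \<open>f x \<in> P'\<close> \<open>f y \<in> P'\<close>]
      by (simp add: card_image inj_on_def)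
  qed
  moreover have "3 \<le> card (setperp (bbP f P P' L') (bbL f P L P' L') {Inr (Inr u), Inr (Inr v)})"
    if "u \<in> P'" "v \<in> P'" "u \<noteq> v" for u v
  proof -
    let ?B = "{x \<in> P. f x \<in> setperp P' L' {u, v}}"
    have "{x. (x, u) \<in> calP f P P' L'} \<inter> {x. (x, v) \<in> calP f P P' L'} = ?B"
      using that fP calP_fibre_right[of f P P' _ L'] by (auto simp: setperp_pair)
    then have "setperp (bbP f P P' L') (bbL f P L P' L') {Inr (Inr u), Inr (Inr v)} = (Inr \<circ> Inl) ` ?B"
      using that(3) by (simp add: setperp_bbP_Inr_Inr_pair)
    moreover have "card ?B = card (setperp P' L' {u, v})"
    proof -
      have "setperp P' L' {u, v} \<subseteq> f ` P"
        using perp_subset[OF that(1)] fP by (auto simp: setperp_pair)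
      then have "f ` ?B = setperp P' L' {u, v}" by blast
      moreover have "inj_on f ?B" using inj by (rule inj_on_subset) blast
      ultimately show ?thesis by (metis card_image)
    qed
    ultimately show ?thesis
      using gq22_card_setperp_pair[OF assms(2) that(1,2)]
      by (simp add: card_image inj_on_def)
  qed
  ultimately show ?thesis by blast
qed

end
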